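(* Let $p\in(0,1)$ and let $(\lambda_n)_{n\ge1}$ be a sequence with $\lambda_1=1$ and $0\le\lambda_n\le\lambda_{n-1}$ for all $n>1$. Let $r_1,r_2,\dots$ be $\{0,1\}$-valued random variables with $\Pr(r_1=1)=p$ and, for every $n\ge2$, $\Pr(r_n=1\mid r_1,\dots,r_{n-1})=\lambda_n p+(1-\lambda_n)\bar p_{n-1}$, where $\bar p_m=\frac1m\sum_{i=1}^m r_i$. Then for every $n\ge1$, \[\mathbb{E}\big[(\bar p_n-p)^2\big]=p(1-p)\Big(\frac1{n^2}+\sum_{i=1}^{n-1}\frac1{i^2}\prod_{j=i+1}^{n}\frac{(j-1)(j+1-2\lambda_j)}{j^2}\Big).\] *)

theory Defs
  imports "HOL-Probability.Probability"
begin

definition pbar :: "(nat \<Rightarrow> 'a \<Rightarrow> bool) \<Rightarrow> nat \<Rightarrow> 'a \<Rightarrow> real" where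
  "pbar r m w = (\<Sum>i=1..m. of_bool (r i w)) / real m"

end

theory Submission
  imports Defs
begin

(* With D_k = pbar_k - p, the conditional law reads E[r_k - p | r_1, ..., r_(k-1)] = (1 - lam_k) D_(k-1).
   Hence E r_k = p for every k, so E D_k = 0, and squaring k D_k = (k - 1) D_(k-1) + (r_k - p) gives
     k^2 E[D_k^2] = (k - 1) (k + 1 - 2 lam_k) E[D_(k-1)^2] + p (1 - p),
   a first-order linear recurrence starting from E[D_1^2] = p (1 - p), whose unrolling is the formula.
   Conditioning on the past is done by hand: the past is the finite random set history r k of
   indices i < k with r_i = 1, so expectations of its functions are finite sums over its values. *)

lemma (in finite_measure)
  fixes X :: "'a \<Rightarrow> 'b" and f :: "'b \<Rightarrow> real"
  assumes B: "finite B" "\<And>w. w \<in> space M \<Longrightarrow> X w \<in> B"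
    and sets_X: "\<And>b. b \<in> B \<Longrightarrow> {w \<in> space M. X w = b} \<in> sets M"
  shows integrable_fun_finite_valued: "integrable M (\<lambda>w. f (X w))"
    and integral_fun_finite_valued:
      "(\<integral>w. f (X w) \<partial>M) = (\<Sum>b\<in>B. f b * measure M {w \<in> space M. X w = b})"
proof -
  have as_sum: "f (X w) = (\<Sum>b\<in>B. f b * indicator {w \<in> space M. X w = b} w)"
    if "w \<in> space M" for w
    using B that by (simp add: indicator_def sum.delta' if_distrib[of "(*) _"] eq_commute cong: if_cong)
  have integrable_summand: "integrable M (\<lambda>w. f b * indicator {w \<in> space M. X w = b} w)"
    if "b \<in> B" for b
    using sets_X[OF that] by (simp add: less_top[symmetric])
  show "integrable M (\<lambda>w. f (X w))"
    using integrable_summand by (subst Bochner_Integration.integrable_cong[OF refl as_sum]) auto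
  have "(\<integral>w. f (X w) \<partial>M) = (\<integral>w. (\<Sum>b\<in>B. f b * indicator {w \<in> space M. X w = b} w) \<partial>M)"
    using as_sum by (rule Bochner_Integration.integral_cong[OF refl])
  also have "\<dots> = (\<Sum>b\<in>B. f b * measure M {w \<in> space M. X w = b})"
    using integrable_summand by (simp add: integral_sum Int_absorb2)
  finally show "(\<integral>w. f (X w) \<partial>M) = (\<Sum>b\<in>B. f b * measure M {w \<in> space M. X w = b})" .
qed

lemma linear_recurrence_solution:
  fixes V a b :: "nat \<Rightarrow> real"
  assumes "V 1 = b 1" and "\<And>k. k \<ge> 2 \<Longrightarrow> V k = a k * V (k - 1) + b k" and "n \<ge> 1"
  shows "V n = (\<Sum>i=1..n. b i * (\<Prod>j=i+1..n. a j))"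
  using \<open>n \<ge> 1\<close>
proof (induction n rule: nat_induct_at_least)
  case base
  then show ?case using assms(1) by simp
next
  case (Suc n)
  have "V (Suc n) = a (Suc n) * (\<Sum>i=1..n. b i * (\<Prod>j=i+1..n. a j)) + b (Suc n)"
    using assms(2)[of "Suc n"] Suc by simp
  also have "\<dots> = (\<Sum>i=1..Suc n. b i * (\<Prod>j=i+1..Suc n. a j))"
    by (simp add: sum_distrib_left mult_ac)
  finally show ?case .
qed

definition history :: "(nat \<Rightarrow> 'a \<Rightarrow> bool) \<Rightarrow> nat \<Rightarrow> 'a \<Rightarrow> nat set" where
  "history r k w = {i \<in> {1..<k}. r i w}"

lemma history_subset: "history r k w \<subseteq> {1..<k}"
  by (auto simp: history_def)

lemma history_eq_iff:
  "S \<subseteq> {1..<k} \<Longrightarrow> history r k w = S \<longleftrightarrow> (\<forall>i\<in>{1..<k}. r i w = (i \<in> S))"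
  by (auto simp: history_def)

lemma pbar_eq_card_history: "pbar r m w = card (history r (Suc m) w) / m"
proof -
  have "{1..m} \<inter> {i. r i w} = history r (Suc m) w"
    by (auto simp: history_def)
  then show ?thesis
    by (simp add: pbar_def)
qed

lemma pbar_Suc: "pbar r (Suc m) w = (m * pbar r m w + of_bool (r (Suc m) w)) / Suc m"
  by (simp add: pbar_def)

locale reinforced_bernoulli_process = prob_space M for M :: "'a measure" +
  fixes r :: "nat \<Rightarrow> 'a \<Rightarrow> bool" and lam :: "nat \<Rightarrow> real" and p :: real
  assumes r_measurable: "\<And>i. r i \<in> M \<rightarrow>\<^sub>M count_space UNIV"
    and prob_r1: "prob {w \<in> space M. r 1 w} = p"
    and prob_r_history: "\<And>k b. k \<ge> 2 \<Longrightarrow>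
           prob {w \<in> space M. r k w \<and> (\<forall>i\<in>{1..<k}. r i w = b i)}
           = (lam k * p + (1 - lam k) * ((\<Sum>i=1..<k. of_bool (b i)) / real (k - 1)))
             * prob {w \<in> space M. \<forall>i\<in>{1..<k}. r i w = b i}"
begin

lemma sets_r_eq: "{w \<in> space M. r i w = c} \<in> events"
  using measurable_sets[OF r_measurable, of "{c}" i] by (simp add: vimage_def Int_def conj_commute)

lemma sets_history_eq: "{w \<in> space M. history r k w = S} \<in> events"
proof (cases "S \<subseteq> {1..<k}")
  case True
  then show ?thesis
    using sets.sets_Collect_finite_All[OF sets_r_eq, of "{1..<k}"] by (simp add: history_eq_iff)
next
  case False
  then have "{w \<in> space M. history r k w = S} = {}"
    using history_subset[of r k] by blast
  then show ?thesis
    by (metis sets.empty_sets)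
qed

lemma expectation_fun_history:
  "expectation (\<lambda>w. f (history r k w))
    = (\<Sum>S\<in>Pow {1..<k}. f S * prob {w \<in> space M. history r k w = S})"
proof -
  have "finite (Pow {1..<k})" and "\<And>w. history r k w \<in> Pow {1..<k}"
    by (auto simp: history_def)
  from integral_fun_finite_valued[OF this sets_history_eq] show ?thesis .
qed

lemma
  shows integrable_fun_r_history: "integrable M (\<lambda>w. F (r m w) (history r k w))"
    and expectation_fun_r_history: "expectation (\<lambda>w. F (r m w) (history r k w))
      = (\<Sum>(c, S)\<in>UNIV \<times> Pow {1..<k}. F c S * prob {w \<in> space M. r m w = c \<and> history r k w = S})"
proof -
  have "finite ((UNIV :: bool set) \<times> Pow {1..<k})" and "\<And>w. (r m w, history r k w) \<in> UNIV \<times> Pow {1..<k}"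
    by (auto simp: history_def)
  moreover have "{w \<in> space M. (r m w, history r k w) = cS} \<in> events" for cS
  proof -
    have "{w \<in> space M. (r m w, history r k w) = cS}
        = {w \<in> space M. r m w = fst cS} \<inter> {w \<in> space M. history r k w = snd cS}"
      by (cases cS) auto
    then show ?thesis
      using sets_r_eq sets_history_eq by auto
  qed
  ultimately have "integrable M (\<lambda>w. case_prod F (r m w, history r k w))"
    and "expectation (\<lambda>w. case_prod F (r m w, history r k w))
      = (\<Sum>cS\<in>UNIV \<times> Pow {1..<k}. case_prod F cS * prob {w \<in> space M. (r m w, history r k w) = cS})"
    by (rule integrable_fun_finite_valued integral_fun_finite_valued)+
  then show "integrable M (\<lambda>w. F (r m w) (history r k w))"
    and "expectation (\<lambda>w. F (r m w) (history r k w))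
      = (\<Sum>(c, S)\<in>UNIV \<times> Pow {1..<k}. F c S * prob {w \<in> space M. r m w = c \<and> history r k w = S})"
    by (simp_all add: case_prod_beta' prod_eq_iff)
qed

lemma integrable_fun_r_pbar:
  fixes F :: "bool \<Rightarrow> real \<Rightarrow> real"
  shows "integrable M (\<lambda>w. F (r k w) (pbar r m w))"
  using integrable_fun_r_history[of "\<lambda>c S. F c (real (card S) / real m)" k "Suc m"]
  by (simp add: pbar_eq_card_history)

lemma integrable_fun_pbar:
  fixes f :: "real \<Rightarrow> real"
  shows "integrable M (\<lambda>w. f (pbar r m w))"
  using integrable_fun_r_pbar[of "\<lambda>_. f"] .

lemma integrable_r: "integrable M (\<lambda>w. of_bool (r k w) :: real)"
  using integrable_fun_r_pbar[of "\<lambda>c _. of_bool c"] .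

text \<open>Tested against functions of the past, this is
  E[r_k | r_1, ..., r_(k-1)] = lam_k p + (1 - lam_k) pbar_(k-1).\<close>

lemma expectation_r_times_fun_history:
  fixes g :: "nat set \<Rightarrow> real"
  assumes "k \<ge> 2"
  shows "expectation (\<lambda>w. of_bool (r k w) * g (history r k w))
    = expectation (\<lambda>w. (lam k * p + (1 - lam k) * pbar r (k - 1) w) * g (history r k w))"
proof -
  define q :: "nat set \<Rightarrow> real" where "q S = lam k * p + (1 - lam k) * (real (card S) / real (k - 1))" for S
  have prob_r_and_history: "prob {w \<in> space M. r k w \<and> history r k w = S}
      = q S * prob {w \<in> space M. history r k w = S}" if "S \<subseteq> {1..<k}" for S
  proof -
    have "(\<Sum>i=1..<k. of_bool (i \<in> S)) = real (card S)"
      using that by (simp add: Int_absorb1)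
    then show ?thesis
      using prob_r_history[OF assms, of "\<lambda>i. i \<in> S"] that by (simp add: history_eq_iff q_def)
  qed
  have "expectation (\<lambda>w. of_bool (r k w) * g (history r k w))
      = (\<Sum>(c, S)\<in>UNIV \<times> Pow {1..<k}.
           of_bool c * g S * prob {w \<in> space M. r k w = c \<and> history r k w = S})"
    by (rule expectation_fun_r_history)
  also have "\<dots> = (\<Sum>S\<in>Pow {1..<k}. g S * prob {w \<in> space M. r k w \<and> history r k w = S})"
    by (simp add: sum.cartesian_product[symmetric] UNIV_bool)
  also have "\<dots> = (\<Sum>S\<in>Pow {1..<k}. q S * g S * prob {w \<in> space M. history r k w = S})"
    by (intro sum.cong) (simp_all add: prob_r_and_history)
  also have "\<dots> = expectation (\<lambda>w. q (history r k w) * g (history r k w))"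
    by (rule expectation_fun_history[symmetric])
  also have "\<dots> = expectation (\<lambda>w. (lam k * p + (1 - lam k) * pbar r (k - 1) w) * g (history r k w))"
    using assms by (simp add: q_def pbar_eq_card_history)
  finally show ?thesis .
qed

lemma expectation_r_times_fun_pbar:
  fixes f :: "real \<Rightarrow> real"
  assumes "k \<ge> 2"
  shows "expectation (\<lambda>w. of_bool (r k w) * f (pbar r (k - 1) w))
    = expectation (\<lambda>w. (lam k * p + (1 - lam k) * pbar r (k - 1) w) * f (pbar r (k - 1) w))"
proof -
  have "pbar r (k - 1) w = real (card (history r k w)) / real (k - 1)" for w
    using assms pbar_eq_card_history[of r "k - 1"] by simp
  then show ?thesis
    using expectation_r_times_fun_history[OF assms, of "\<lambda>S. f (real (card S) / real (k - 1))"]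
    by simp
qed

lemma expectation_pbar_eq_average:
  "expectation (\<lambda>w. pbar r m w) = (\<Sum>i=1..m. expectation (\<lambda>w. of_bool (r i w))) / m"
  unfolding pbar_def using integrable_r by (simp add: integral_sum del: sum_of_bool_eq)

lemma expectation_r: "k \<ge> 1 \<Longrightarrow> expectation (\<lambda>w. of_bool (r k w)) = p"
proof (induction k rule: less_induct)
  case (less k)
  show ?case
  proof (cases "k = 1")
    case True
    have "expectation (\<lambda>w. of_bool (r 1 w)) = expectation (indicator {w \<in> space M. r 1 w})"
      by (intro Bochner_Integration.integral_cong) (auto simp: indicator_def)
    also have "\<dots> = prob {w \<in> space M. r 1 w}"
      by (simp add: Int_absorb2)
    finally show ?thesis
      using True prob_r1 by simp
  next
    case False
    then have k: "k \<ge> 2"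
      using less.prems by simp
    have "(\<Sum>i=1..k-1. expectation (\<lambda>w. of_bool (r i w))) = (\<Sum>i=1..k-1. p)"
      using less.IH k by (intro sum.cong) auto
    then have "expectation (\<lambda>w. pbar r (k - 1) w) = p"
      using k by (simp add: expectation_pbar_eq_average)
    have "expectation (\<lambda>w. of_bool (r k w))
        = expectation (\<lambda>w. lam k * p + (1 - lam k) * pbar r (k - 1) w)"
      using expectation_r_times_fun_pbar[OF k, of "\<lambda>_. 1"] by simp
    also have "\<dots> = lam k * p + (1 - lam k) * expectation (\<lambda>w. pbar r (k - 1) w)"
      using integrable_fun_pbar[of "\<lambda>x. x"] by (simp add: prob_space)
    finally show ?thesis
      using \<open>expectation (\<lambda>w. pbar r (k - 1) w) = p\<close> by (simp add: algebra_simps)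
  qed
qed

lemma expectation_pbar: "m \<ge> 1 \<Longrightarrow> expectation (\<lambda>w. pbar r m w) = p"
  by (simp add: expectation_pbar_eq_average expectation_r)

lemma expectation_centered_r_squared:
  assumes "k \<ge> 1"
  shows "expectation (\<lambda>w. (of_bool (r k w) - p)\<^sup>2) = p * (1 - p)"
proof -
  have "(of_bool c - p)\<^sup>2 = (1 - 2 * p) * of_bool c + p\<^sup>2" for c
    by (cases c) (simp_all add: power2_eq_square algebra_simps)
  then have "expectation (\<lambda>w. (of_bool (r k w) - p)\<^sup>2)
      = (1 - 2 * p) * expectation (\<lambda>w. of_bool (r k w)) + p\<^sup>2"
    using integrable_r by (simp add: prob_space)
  then show ?thesis
    using expectation_r[OF assms] by (simp add: power2_eq_square algebra_simps)
qed

lemma expectation_centered_r_times_deviation: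
  assumes "k \<ge> 2"
  shows "expectation (\<lambda>w. (of_bool (r k w) - p) * (pbar r (k - 1) w - p))
    = (1 - lam k) * expectation (\<lambda>w. (pbar r (k - 1) w - p)\<^sup>2)"
proof -
  have mean_zero: "expectation (\<lambda>w. pbar r (k - 1) w - p) = 0"
    using assms integrable_fun_pbar[of "\<lambda>x. x"] by (simp add: expectation_pbar prob_space)
  have "expectation (\<lambda>w. (of_bool (r k w) - p) * (pbar r (k - 1) w - p))
      = expectation (\<lambda>w. of_bool (r k w) * (pbar r (k - 1) w - p))
        - p * expectation (\<lambda>w. pbar r (k - 1) w - p)"
    using integrable_fun_r_pbar[of "\<lambda>c x. of_bool c * (x - p)" k "k - 1"]
      integrable_fun_pbar[of "\<lambda>x. x - p"]
    by (simp add: left_diff_distrib)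
  also have "expectation (\<lambda>w. of_bool (r k w) * (pbar r (k - 1) w - p))
      = expectation (\<lambda>w. p * (pbar r (k - 1) w - p) + (1 - lam k) * (pbar r (k - 1) w - p)\<^sup>2)"
    using expectation_r_times_fun_pbar[OF assms, of "\<lambda>x. x - p"]
    by (simp add: power2_eq_square algebra_simps)
  also have "\<dots> = (1 - lam k) * expectation (\<lambda>w. (pbar r (k - 1) w - p)\<^sup>2)"
    using integrable_fun_pbar[of "\<lambda>x. x - p"] integrable_fun_pbar[of "\<lambda>x. (x - p)\<^sup>2"] mean_zero
    by simp
  finally show ?thesis
    using mean_zero by simp
qed

lemma mean_squared_deviation_1:
  "expectation (\<lambda>w. (pbar r 1 w - p)\<^sup>2) = p * (1 - p)"
proof -
  have "pbar r 1 w = of_bool (r 1 w)" for w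
    using pbar_Suc[of r 0 w] by simp
  then show ?thesis
    using expectation_centered_r_squared[of 1] by simp
qed

lemma mean_squared_deviation_recurrence:
  assumes "k \<ge> 2"
  shows "expectation (\<lambda>w. (pbar r k w - p)\<^sup>2)
    = real (k - 1) * (real k + 1 - 2 * lam k) / real k ^ 2 * expectation (\<lambda>w. (pbar r (k - 1) w - p)\<^sup>2)
      + p * (1 - p) / real k ^ 2"
proof -
  define m where "m = k - 1"
  have k: "k = Suc m" "m \<ge> 1"
    using assms by (simp_all add: m_def)
  define D where "D w = pbar r m w - p" for w
  define X where "X w = of_bool (r k w) - p" for w
  have "pbar r k w - p = (m * D w + X w) / k" for w
    unfolding D_def X_def k(1) pbar_Suc by (simp add: field_simps)
  then have square:
      "(pbar r k w - p)\<^sup>2 = (m\<^sup>2 * (D w)\<^sup>2 + 2 * m * (X w * D w) + (X w)\<^sup>2) / k\<^sup>2" for w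
    by (simp add: power_divide power2_eq_square algebra_simps)
  have "expectation (\<lambda>w. (pbar r k w - p)\<^sup>2)
      = (m\<^sup>2 * expectation (\<lambda>w. (D w)\<^sup>2) + 2 * m * expectation (\<lambda>w. X w * D w)
         + expectation (\<lambda>w. (X w)\<^sup>2)) / k\<^sup>2"
    unfolding square D_def X_def
    using integrable_fun_pbar[of "\<lambda>x. (x - p)\<^sup>2" m]
      integrable_fun_r_pbar[of "\<lambda>c x. (of_bool c - p) * (x - p)" k m]
      integrable_fun_r_pbar[of "\<lambda>c x. (of_bool c - p)\<^sup>2" k m]
    by simp
  also have "\<dots> = (m\<^sup>2 * expectation (\<lambda>w. (D w)\<^sup>2)
         + 2 * m * (1 - lam k) * expectation (\<lambda>w. (D w)\<^sup>2) + p * (1 - p)) / k\<^sup>2"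
    using expectation_centered_r_times_deviation[OF assms] expectation_centered_r_squared[of k] assms
    by (simp add: D_def X_def m_def)
  also have "\<dots> = (real (k - 1) * (real k + 1 - 2 * lam k) * expectation (\<lambda>w. (D w)\<^sup>2)
      + p * (1 - p)) / real k ^ 2"
    unfolding k(1) by (simp add: power2_eq_square algebra_simps)
  also have "\<dots> = real (k - 1) * (real k + 1 - 2 * lam k) / real k ^ 2 * expectation (\<lambda>w. (D w)\<^sup>2)
      + p * (1 - p) / real k ^ 2"
    by (simp add: add_divide_distrib)
  finally show ?thesis
    unfolding D_def m_def .
qed

end

theorem theoremA4:
  fixes M :: "'a measure" and r :: "nat \<Rightarrow> 'a \<Rightarrow> bool"
    and lam :: "nat \<Rightarrow> real" and p :: real and n :: nat
  assumes "prob_space M"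
    and "0 < p" and "p < 1"
    and "lam 1 = 1"
    and "\<forall>k>1. 0 \<le> lam k \<and> lam k \<le> lam (k - 1)"
    and "\<forall>i. r i \<in> M \<rightarrow>\<^sub>M count_space UNIV"
    and "measure M {w \<in> space M. r 1 w} = p"
    and "\<forall>k\<ge>2. \<forall>b :: nat \<Rightarrow> bool.
           measure M {w \<in> space M. r k w \<and> (\<forall>i\<in>{1..<k}. r i w = b i)}
           = (lam k * p + (1 - lam k) * ((\<Sum>i=1..<k. of_bool (b i)) / real (k - 1)))
             * measure M {w \<in> space M. \<forall>i\<in>{1..<k}. r i w = b i}"
    and "n \<ge> 1"
  shows "prob_space.expectation M (\<lambda>w. (pbar r n w - p)^2)
         = p * (1 - p) * (1 / real n ^ 2 +
             (\<Sum>i=1..<n. 1 / real i ^ 2 *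
                (\<Prod>j=i+1..n. real (j - 1) * (real j + 1 - 2 * lam j) / real j ^ 2)))"
proof -
  interpret reinforced_bernoulli_process M r lam p
    by (rule reinforced_bernoulli_process.intro[OF assms(1)], unfold_locales)
      (use assms(6-8) in auto)
  define a where "a j = real (j - 1) * (real j + 1 - 2 * lam j) / real j ^ 2" for j
  have "expectation (\<lambda>w. (pbar r n w - p)\<^sup>2)
      = (\<Sum>i=1..n. p * (1 - p) / real i ^ 2 * (\<Prod>j=i+1..n. a j))"
    using mean_squared_deviation_1 mean_squared_deviation_recurrence \<open>n \<ge> 1\<close>
    by (intro linear_recurrence_solution) (simp_all add: a_def)
  also have "\<dots> = p * (1 - p) * (1 / real n ^ 2 + (\<Sum>i=1..<n. 1 / real i ^ 2 * (\<Prod>j=i+1..n. a j)))"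
    using \<open>n \<ge> 1\<close> by (simp add: sum.last_plus sum_distrib_left algebra_simps)
  finally show ?thesis
    by (simp add: a_def)
qed

end
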